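(* Assume that the reward class $\mathcal F_{\mathcal P}$ is compact under $\|\cdot\|_{\infty,\mathrm{supp}(\pi_0)}$ and that, for every $R\in\mathcal F_{\mathcal P}$, the map $a\mapsto R(x,a)$ is continuous on $S_x$ for $d_0$-a.e. $x\in\mathcal X$. Then for every truth $p\in\mathcal P$ and every $R\in\mathcal F_{\mathcal P}$, \[ \mathcal L_p(R)=\mathcal L_p(R_p)\quad\Longrightarrow\quad R(x,a)=R_p(x,a)\qquad\forall a\in S_x,\quad d_0\text{-a.e. }x. \] In particular, $\mathcal G_p(R)=0$.
   Context: $\mathcal X$ is a context space with context distribution $d_0$; $\mathcal A$ is a separable metric action space; $\pi_0:\mathcal X\to\Delta(\mathcal A)$ is a reference policy and $S_x:=\mathrm{supp}(\pi_0(\cdot\mid x))$ is the topological support; $\|R\|_{\infty,\mathrm{supp}(\pi_0)}$ is the supremum of $|R(x,a)|$ over pairs with $a\in S_x$. $\mathcal P$ is a compact class of truths; each $p\in\mathcal P$ induces a $\pi_0$-centered measurable reward $R_p:\mathcal X\times\mathcal A\to\mathbb R$ (i.e. $\mathbb E_{a\sim\pi_0(\cdot\mid x)}[R_p(x,a)]=0$), and $\mathcal F_{\mathcal P}:=\{R_p:p\in\mathcal P\}$. For a slate $\mathbf a=(a_1,\dots,a_K)$, $K\ge2$, the MNL choice model is $P_R(y=k\mid x,\mathbf a)=e^{R(x,a_k)}/\sum_{\ell=1}^K e^{R(x,a_\ell)}$, and the log-loss is $\ell(\mathbf v,y)=\log\sum_{k=1}^K e^{v_k}-v_y$. The truth-centered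 population loss is $\mathcal L_p(R):=\mathbb E[\ell(\mathbf v_R,Y)]$ where $X\sim d_0$, $\mathbf A=(A_1,\dots,A_K)\sim\pi_0(\cdot\mid X)^{\otimes K}$, $Y\sim P_{R_p}(\cdot\mid X,\mathbf A)$, and $\mathbf v_R=(R(X,A_1),\dots,R(X,A_K))$. For a centered reward $R$, $a_R(x)$ is a measurable selector in $\arg\max_{a\in S_x}R(x,a)$ under a fixed common measurable tie-breaking rule, $a_p:=a_{R_p}$, and the temperature-zero regret is $\mathcal G_p(R):=\mathbb E_{X\sim d_0}[R_p(X,a_p(X))-R_p(X,a_R(X))]$. *)

theory Defs
  imports "HOL-Probability.Probability"
begin

definition topsupp :: "'a::topological_space measure \<Rightarrow> 'a set" where
  "topsupp \<mu> = {a. \<forall>U. open U \<and> a \<in> U \<longrightarrow> emeasure \<mu> U > 0}"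

definition supp_pairs :: "'x measure \<Rightarrow> ('x \<Rightarrow> 'a::topological_space measure) \<Rightarrow> ('x \<times> 'a) set" where
  "supp_pairs d0 \<pi>0 = {(x, a). x \<in> space d0 \<and> a \<in> topsupp (\<pi>0 x)}"

definition supp_norm :: "'x measure \<Rightarrow> ('x \<Rightarrow> 'a::topological_space measure) \<Rightarrow> ('x \<Rightarrow> 'a \<Rightarrow> real) \<Rightarrow> real" where
  "supp_norm d0 \<pi>0 R = (SUP xa \<in> supp_pairs d0 \<pi>0. \<bar>R (fst xa) (snd xa)\<bar>)"

definition bounded_on_supp :: "'x measure \<Rightarrow> ('x \<Rightarrow> 'a::topological_space measure) \<Rightarrow> ('x \<Rightarrow> 'a \<Rightarrow> real) \<Rightarrow> bool" where
  "bounded_on_supp d0 \<pi>0 R \<longleftrightarrow> bdd_above ((\<lambda>xa. \<bar>R (fst xa) (snd xa)\<bar>) ` supp_pairs d0 \<pi>0)"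

text \<open>Compactness of a class of rewards w.r.t. the (pseudo)norm supp_norm: all members have
  finite norm and the class is sequentially compact (equivalent to compactness in a pseudometric space).\<close>
definition compact_supp :: "'x measure \<Rightarrow> ('x \<Rightarrow> 'a::topological_space measure) \<Rightarrow> ('x \<Rightarrow> 'a \<Rightarrow> real) set \<Rightarrow> bool" where
  "compact_supp d0 \<pi>0 F \<longleftrightarrow>
     (\<forall>R\<in>F. bounded_on_supp d0 \<pi>0 R) \<and>
     (\<forall>f::nat \<Rightarrow> 'x \<Rightarrow> 'a \<Rightarrow> real. (\<forall>n. f n \<in> F) \<longrightarrow>
        (\<exists>r R. strict_mono r \<and> R \<in> F \<and>
           (\<lambda>n. supp_norm d0 \<pi>0 (\<lambda>x a. f (r n) x a - R x a)) \<longlonglongrightarrow> 0))"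

text \<open>MNL choice probabilities for a slate as : nat => 'a (entries 0..K-1).\<close>
definition mnl :: "nat \<Rightarrow> ('x \<Rightarrow> 'a \<Rightarrow> real) \<Rightarrow> 'x \<Rightarrow> (nat \<Rightarrow> 'a) \<Rightarrow> nat \<Rightarrow> real" where
  "mnl K R x as k = exp (R x (as k)) / (\<Sum>l<K. exp (R x (as l)))"

definition logloss :: "nat \<Rightarrow> (nat \<Rightarrow> real) \<Rightarrow> nat \<Rightarrow> real" where
  "logloss K v y = ln (\<Sum>k<K. exp (v k)) - v y"

text \<open>Truth-centered population loss L_p(R), with Y ~ P_{R_p} integrated out explicitly.\<close>
definition pop_loss :: "nat \<Rightarrow> 'x measure \<Rightarrow> ('x \<Rightarrow> 'a measure) \<Rightarrow> ('x \<Rightarrow> 'a \<Rightarrow> real)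
                        \<Rightarrow> ('x \<Rightarrow> 'a \<Rightarrow> real) \<Rightarrow> real" where
  "pop_loss K d0 \<pi>0 Rp R =
     (\<integral>x. (\<integral>as. (\<Sum>k<K. mnl K Rp x as k * logloss K (\<lambda>j. R x (as j)) k)
               \<partial>(PiM {..<K} (\<lambda>_. \<pi>0 x))) \<partial>d0)"

definition argmax_supp :: "('x \<Rightarrow> 'a::topological_space measure) \<Rightarrow> ('x \<Rightarrow> 'a \<Rightarrow> real) \<Rightarrow> 'x \<Rightarrow> 'a set" where
  "argmax_supp \<pi>0 R x = {a \<in> topsupp (\<pi>0 x). \<forall>b \<in> topsupp (\<pi>0 x). R x b \<le> R x a}"

text \<open>Selector a_R(x) under a fixed common tie-breaking rule tb (tb chooses an element of a set).\<close>
definition sel :: "('a set \<Rightarrow> 'a) \<Rightarrow> ('x \<Rightarrow> 'a::topological_space measure) \<Rightarrow> ('x \<Rightarrow> 'a \<Rightarrow> real) \<Rightarrow> 'x \<Rightarrow> 'a" where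
  "sel tb \<pi>0 R x = tb (argmax_supp \<pi>0 R x)"

definition regret :: "('a set \<Rightarrow> 'a) \<Rightarrow> 'x measure \<Rightarrow> ('x \<Rightarrow> 'a::topological_space measure)
                      \<Rightarrow> ('x \<Rightarrow> 'a \<Rightarrow> real) \<Rightarrow> ('x \<Rightarrow> 'a \<Rightarrow> real) \<Rightarrow> real" where
  "regret tb d0 \<pi>0 Rp R = (\<integral>x. Rp x (sel tb \<pi>0 Rp x) - Rp x (sel tb \<pi>0 R x) \<partial>d0)"

end

theory Submission
  imports Defs
begin

text \<open>
  Given a context x and a slate, the excess log-loss of R over the truth R_p is the KL divergence
  between the two MNL choice distributions, so it is nonnegative; equal population losses force it
  to vanish for a.e. context and a.e. slate. A vanishing KL divergence means that
  D = R(x,.) - R_p(x,.) is constant along the slate, i.e. D(A_1) = D(A_0) almost surely for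
  independent A_0, A_1 drawn from pi_0(.|x). As D is centered, E[D^2] = E[D(A_0) D(A_1)] = (E D)^2 = 0,
  so D vanishes pi_0-a.e., and by continuity at every point of the topological support.
  Rewards that agree on the support have the same maximisers there, so the regret vanishes
  whatever the tie-breaking rule. Compactness of the reward class is used only through the
  boundedness of its members, which makes every loss integrable.
\<close>

section \<open>Gibbs inequality for softmax choice probabilities\<close>

lemma mult_ln_diff_ge:
  fixes p q :: real
  assumes "p > 0" "q > 0"
  shows "p - q \<le> p * (ln p - ln q)"
proof -
  have "p * ln (q / p) \<le> p * (q / p - 1)"
    using assms by (intro mult_left_mono ln_le_minus_one) auto
  moreover have "p * ln (q / p) = - (p * (ln p - ln q))" "p * (q / p - 1) = q - p"
    using assms by (simp_all add: ln_div algebra_simps)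
  ultimately show ?thesis by linarith
qed

lemma mult_ln_diff_eq_imp_eq:
  fixes p q :: real
  assumes "p > 0" "q > 0" and eq: "p * (ln p - ln q) = p - q"
  shows "q = p"
proof -
  have "p * ln (q / p) = - (p * (ln p - ln q))" "p * (q / p - 1) = q - p"
    using assms by (simp_all add: ln_div algebra_simps)
  then have "p * ln (q / p) = p * (q / p - 1)" using eq by simp
  then have "ln (q / p) = q / p - 1" using assms by simp
  then have "q / p = 1" using assms ln_eq_minus_one[of "q / p"] by simp
  then show ?thesis using assms by simp
qed

definition softmax :: "nat \<Rightarrow> (nat \<Rightarrow> real) \<Rightarrow> nat \<Rightarrow> real" where
  "softmax K u k = exp (u k) / (\<Sum>l<K. exp (u l))"

definition cross_entropy :: "nat \<Rightarrow> (nat \<Rightarrow> real) \<Rightarrow> (nat \<Rightarrow> real) \<Rightarrow> real" where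
  "cross_entropy K u v = (\<Sum>k<K. softmax K u k * logloss K v k)"

lemma sum_exp_pos: "(K::nat) > 0 \<Longrightarrow> 0 < (\<Sum>l<K. exp (u l :: real))"
  by (intro sum_pos) auto

lemma softmax_pos: "K > 0 \<Longrightarrow> 0 < softmax K u k"
  by (simp add: softmax_def sum_exp_pos)

lemma sum_softmax: "K > 0 \<Longrightarrow> (\<Sum>k<K. softmax K u k) = 1"
  unfolding softmax_def sum_divide_distrib[symmetric] using sum_exp_pos[of K u] by simp

lemma ln_softmax: "K > 0 \<Longrightarrow> ln (softmax K u k) = u k - ln (\<Sum>l<K. exp (u l))"
  by (simp add: softmax_def ln_div sum_exp_pos less_imp_neq[OF sum_exp_pos, symmetric])

lemma logloss_eq_minus_ln_softmax: "K > 0 \<Longrightarrow> logloss K v k = - ln (softmax K v k)"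
  by (simp add: logloss_def ln_softmax)

lemma cross_entropy_minus_self:
  assumes "K > 0"
  shows "cross_entropy K u v - cross_entropy K u u
           = (\<Sum>k<K. softmax K u k * (ln (softmax K u k) - ln (softmax K v k))
                     - (softmax K u k - softmax K v k))"
  using assms
  by (simp add: cross_entropy_def logloss_eq_minus_ln_softmax sum_subtractf sum_softmax
      right_diff_distrib sum_negf)

lemma cross_entropy_self_le:
  assumes "K > 0"
  shows "cross_entropy K u u \<le> cross_entropy K u v"
proof -
  have "0 \<le> cross_entropy K u v - cross_entropy K u u"
    unfolding cross_entropy_minus_self[OF assms]
    using mult_ln_diff_ge[OF softmax_pos softmax_pos, OF assms assms]
    by (intro sum_nonneg) (simp add: algebra_simps)
  then show ?thesis by simp
qed

lemma cross_entropy_eq_self_imp_shift: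
  assumes K: "K > 0" and eq: "cross_entropy K u v = cross_entropy K u u"
    and "j < K" "k < K"
  shows "v j - u j = v k - u k"
proof -
  let ?t = "\<lambda>i. softmax K u i * (ln (softmax K u i) - ln (softmax K v i))
                - (softmax K u i - softmax K v i)"
  have "\<forall>i\<in>{..<K}. ?t i = 0"
    using eq cross_entropy_minus_self[OF K, of u v]
      mult_ln_diff_ge[OF softmax_pos softmax_pos, OF K K]
    by (subst sum_nonneg_eq_0_iff[symmetric]) auto
  then have "softmax K v i = softmax K u i" if "i < K" for i
    using mult_ln_diff_eq_imp_eq[OF softmax_pos softmax_pos, OF K K] that by auto
  then have "v i - u i = ln (\<Sum>l<K. exp (v l)) - ln (\<Sum>l<K. exp (u l))" if "i < K" for i
    using that ln_softmax[OF K, of v i] ln_softmax[OF K, of u i] by simp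
  then show ?thesis using assms by simp
qed

lemma logloss_nonneg:
  assumes "k < K"
  shows "0 \<le> logloss K v k"
proof -
  have "exp (v k) \<le> (\<Sum>l<K. exp (v l))"
    using assms by (intro member_le_sum) auto
  then show ?thesis
    using assms sum_exp_pos[of K v] by (simp add: logloss_def ln_ge_iff)
qed

lemma logloss_le:
  assumes "k < K" and bound: "\<And>j. j < K \<Longrightarrow> \<bar>v j\<bar> \<le> B"
  shows "logloss K v k \<le> ln K + 2 * B"
proof -
  have "(\<Sum>l<K. exp (v l)) \<le> (\<Sum>l<K. exp B)"
    using bound by (intro sum_mono) (auto simp: abs_le_iff)
  then have "ln (\<Sum>l<K. exp (v l)) \<le> ln (K * exp B)"
    using assms by (simp add: sum_exp_pos)
  also have "\<dots> = ln K + B" using assms by (simp add: ln_mult)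
  finally show ?thesis using bound[OF assms(1)] by (simp add: logloss_def)
qed

lemma cross_entropy_nonneg: "K > 0 \<Longrightarrow> 0 \<le> cross_entropy K u v"
  unfolding cross_entropy_def
  by (intro sum_nonneg mult_nonneg_nonneg less_imp_le[OF softmax_pos] logloss_nonneg) auto

lemma cross_entropy_le:
  assumes K: "K > 0" and bound: "\<And>j. j < K \<Longrightarrow> \<bar>v j\<bar> \<le> B"
  shows "cross_entropy K u v \<le> ln K + 2 * B"
proof -
  have "cross_entropy K u v \<le> (\<Sum>k<K. softmax K u k * (ln K + 2 * B))"
    unfolding cross_entropy_def using logloss_le[OF _ bound] softmax_pos[OF K]
    by (intro sum_mono mult_left_mono) (auto intro: less_imp_le)
  also have "\<dots> = ln K + 2 * B" using K by (simp add: sum_softmax flip: sum_distrib_right)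
  finally show ?thesis .
qed

section \<open>Topological support and independent draws\<close>

lemma AE_in_topsupp:
  fixes \<mu> :: "'a::{topological_space, second_countable_topology} measure"
  assumes sets: "sets \<mu> = sets borel"
  shows "AE a in \<mu>. a \<in> topsupp \<mu>"
proof -
  define \<U> where "\<U> = {U. open U \<and> emeasure \<mu> U = 0}"
  obtain \<U>' where \<U>': "\<U>' \<subseteq> \<U>" "countable \<U>'" "\<Union>\<U>' = \<Union>\<U>"
    using Lindelof_openin[of \<U> UNIV] unfolding \<U>_def by (auto simp: subtopology_UNIV)
  have "(\<Union>U\<in>\<U>'. U) \<in> null_sets \<mu>"
    using \<U>' by (intro null_sets_UN') (auto simp: \<U>_def null_sets_def sets)
  moreover have "{a \<in> space \<mu>. a \<notin> topsupp \<mu>} \<subseteq> (\<Union>U\<in>\<U>'. U)"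
    unfolding image_ident \<U>'(3) by (auto simp: topsupp_def \<U>_def not_less)
  ultimately show ?thesis by (rule AE_I')
qed

lemma AE_eq_imp_eq_on_topsupp:
  fixes \<mu> :: "'a::{topological_space, second_countable_topology} measure" and f g :: "'a \<Rightarrow> real"
  assumes sets: "sets \<mu> = sets borel"
    and cont: "continuous_on (topsupp \<mu>) f" "continuous_on (topsupp \<mu>) g"
    and AE_eq: "AE a in \<mu>. f a = g a"
    and a: "a \<in> topsupp \<mu>"
  shows "f a = g a"
proof (rule ccontr)
  assume "f a \<noteq> g a"
  moreover have "continuous_on (topsupp \<mu>) (\<lambda>b. f b - g b)"
    using cont by (intro continuous_intros)
  ultimately obtain U where U: "open U" "a \<in> U" "\<And>b. b \<in> topsupp \<mu> \<Longrightarrow> b \<in> U \<Longrightarrow> f b \<noteq> g b"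
    using a unfolding continuous_on_topological
    by (elim ballE allE[of _ "- {0}"]) auto
  have "AE b in \<mu>. b \<notin> U"
    using AE_eq AE_in_topsupp[OF sets] by eventually_elim (use U in blast)
  then have "emeasure \<mu> U = 0"
    using U(1) sets
    by (subst (asm) AE_iff_measurable[OF _ refl]) (auto simp: sets_eq_imp_space_eq[OF sets])
  with U a show False by (auto simp: topsupp_def)
qed

lemma (in product_prob_space) integral_prod_subset:
  fixes f :: "'i \<Rightarrow> 'a \<Rightarrow> real"
  assumes "finite I" "J \<subseteq> I" and integrable: "\<And>i. i \<in> J \<Longrightarrow> integrable (M i) (f i)"
  shows "(\<integral>x. (\<Prod>i\<in>J. f i (x i)) \<partial>Pi\<^sub>M I M) = (\<Prod>i\<in>J. integral\<^sup>L (M i) (f i))"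
proof -
  define g where "g i = (if i \<in> J then f i else (\<lambda>_. 1))" for i
  have "(\<Prod>i\<in>J. f i (x i)) = (\<Prod>i\<in>I. g i (x i))" for x
    using assms(1,2) by (intro prod.mono_neutral_cong_left) (auto simp: g_def)
  moreover have "(\<Prod>i\<in>J. integral\<^sup>L (M i) (f i)) = (\<Prod>i\<in>I. integral\<^sup>L (M i) (g i))"
    using assms(1,2) by (intro prod.mono_neutral_cong_left) (auto simp: g_def M.prob_space)
  moreover have "(\<integral>x. (\<Prod>i\<in>I. g i (x i)) \<partial>Pi\<^sub>M I M) = (\<Prod>i\<in>I. integral\<^sup>L (M i) (g i))"
    using assms by (intro product_integral_prod) (auto simp: g_def)
  ultimately show ?thesis by simp
qed

lemma product_prob_space_const:
  "prob_space \<mu> \<Longrightarrow> product_prob_space (\<lambda>_. \<mu>)"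
  by (simp add: product_prob_space_def product_sigma_finite_def prob_space_imp_sigma_finite
      product_prob_space_axioms_def)

lemma centered_AE_eq_components_imp_AE_zero:
  fixes D :: "'a \<Rightarrow> real"
  assumes \<mu>: "prob_space \<mu>" and I: "finite I" "i \<in> I" "j \<in> I" "i \<noteq> j"
    and int: "integrable \<mu> D" "integrable \<mu> (\<lambda>a. D a ^ 2)"
    and centered: "(\<integral>a. D a \<partial>\<mu>) = 0"
    and AE_eq: "AE x in Pi\<^sub>M I (\<lambda>_. \<mu>). D (x i) = D (x j)"
  shows "AE a in \<mu>. D a = 0"
proof -
  interpret product_prob_space "\<lambda>_. \<mu>" I
    using product_prob_space_const[OF \<mu>] .
  have [measurable]: "D \<in> borel_measurable \<mu>"
    using int(1) by (rule borel_measurable_integrable)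
  have [measurable]: "(\<lambda>x. x k) \<in> measurable (Pi\<^sub>M I (\<lambda>_. \<mu>)) \<mu>" if "k \<in> I" for k
    using measurable_component_singleton[OF that] .
  have "(\<integral>a. D a ^ 2 \<partial>\<mu>) = (\<integral>x. D (x i) ^ 2 \<partial>Pi\<^sub>M I (\<lambda>_. \<mu>))"
    using integral_prod_subset[of "{i}" "\<lambda>_ a. D a ^ 2"] I int by simp
  also have "\<dots> = (\<integral>x. D (x i) * D (x j) \<partial>Pi\<^sub>M I (\<lambda>_. \<mu>))"
    using AE_eq I by (intro integral_cong_AE) (auto simp: power2_eq_square)
  also have "\<dots> = (\<integral>a. D a \<partial>\<mu>) * (\<integral>a. D a \<partial>\<mu>)"
    using integral_prod_subset[of "{i, j}" "\<lambda>_. D"] I int by simp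
  finally have "(\<integral>a. D a ^ 2 \<partial>\<mu>) = 0" using centered by simp
  then have "AE a in \<mu>. D a ^ 2 = 0"
    using integral_nonneg_eq_0_iff_AE[OF int(2)] by simp
  then show ?thesis by simp
qed

lemma integrable_bounded_on_topsupp:
  fixes \<mu> :: "'a::{topological_space, second_countable_topology} measure" and f :: "'a \<Rightarrow> real"
  assumes "prob_space \<mu>" "sets \<mu> = sets borel" "f \<in> borel_measurable borel"
    and bound: "\<And>a. a \<in> topsupp \<mu> \<Longrightarrow> \<bar>f a\<bar> \<le> B"
  shows "integrable \<mu> f"
proof -
  interpret prob_space \<mu> by fact
  show ?thesis
  proof (rule integrable_const_bound[where B = B])
    show "AE a in \<mu>. norm (f a) \<le> B"
      using AE_in_topsupp[OF assms(2)] by eventually_elim (use bound in auto)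
    show "f \<in> borel_measurable \<mu>"
      using assms(2,3) by (simp cong: measurable_cong_sets)
  qed
qed

lemma cross_entropy_AE_eq_self_imp_eq_on_topsupp:
  fixes \<mu> :: "'a::{topological_space, second_countable_topology} measure" and R Rp :: "'a \<Rightarrow> real"
  assumes K: "K \<ge> 2" and \<mu>: "prob_space \<mu>" "sets \<mu> = sets borel"
    and meas: "R \<in> borel_measurable borel" "Rp \<in> borel_measurable borel"
    and bound: "\<And>a. a \<in> topsupp \<mu> \<Longrightarrow> \<bar>R a\<bar> \<le> B \<and> \<bar>Rp a\<bar> \<le> B"
    and centered: "(\<integral>a. R a \<partial>\<mu>) = 0" "(\<integral>a. Rp a \<partial>\<mu>) = 0"
    and cont: "continuous_on (topsupp \<mu>) R" "continuous_on (topsupp \<mu>) Rp"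
    and AE_eq: "AE as in Pi\<^sub>M {..<K} (\<lambda>_. \<mu>).
                  cross_entropy K (\<lambda>j. Rp (as j)) (\<lambda>j. R (as j))
                = cross_entropy K (\<lambda>j. Rp (as j)) (\<lambda>j. Rp (as j))"
  shows "\<forall>a \<in> topsupp \<mu>. R a = Rp a"
proof -
  define D where "D a = R a - Rp a" for a
  have D_meas: "D \<in> borel_measurable borel" "(\<lambda>a. D a ^ 2) \<in> borel_measurable borel"
    using meas unfolding D_def by measurable
  have D_bound: "\<bar>D a\<bar> \<le> 2 * B" if "a \<in> topsupp \<mu>" for a
    using bound[OF that] abs_triangle_ineq4[of "R a" "Rp a"] unfolding D_def by linarith
  then have D2_bound: "\<bar>D a ^ 2\<bar> \<le> (2 * B) ^ 2" if "a \<in> topsupp \<mu>" for a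
    using power_mono[OF D_bound[OF that] abs_ge_zero, of 2] by simp
  have int_R: "integrable \<mu> R" "integrable \<mu> Rp"
    using bound by (auto intro!: integrable_bounded_on_topsupp[OF \<mu>] meas)
  have int_D: "integrable \<mu> D" "integrable \<mu> (\<lambda>a. D a ^ 2)"
    using D_bound D2_bound by (auto intro!: integrable_bounded_on_topsupp[OF \<mu>] D_meas)
  have "(\<integral>a. D a \<partial>\<mu>) = 0"
    using int_R centered by (simp add: D_def)
  moreover have "AE as in Pi\<^sub>M {..<K} (\<lambda>_. \<mu>). D (as 1) = D (as 0)"
    using AE_eq
  proof eventually_elim
    case (elim as)
    show ?case
      using cross_entropy_eq_self_imp_shift[OF _ elim, of 1 0] K by (simp add: D_def)
  qed
  ultimately have "AE a in \<mu>. D a = 0"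
    using K by (intro centered_AE_eq_components_imp_AE_zero[OF \<mu>(1), of "{..<K}" 1 0] int_D) auto
  then have "AE a in \<mu>. R a = Rp a" by (simp add: D_def)
  then show ?thesis using AE_eq_imp_eq_on_topsupp[OF \<mu>(2) cont] by blast
qed

section \<open>Kernels and nested integrals\<close>

lemma measurable_PiM_kernel:
  fixes \<pi> :: "'x \<Rightarrow> 'a measure"
  assumes I: "finite I"
    and prob: "\<And>x. x \<in> space M \<Longrightarrow> prob_space (\<pi> x)"
    and sets: "\<And>x. x \<in> space M \<Longrightarrow> sets (\<pi> x) = sets N"
    and meas: "\<pi> \<in> measurable M (subprob_algebra N)"
  shows "(\<lambda>x. Pi\<^sub>M I (\<lambda>_. \<pi> x)) \<in> measurable M (subprob_algebra (Pi\<^sub>M I (\<lambda>_. N)))"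
proof -
  have box: "(\<lambda>x. emeasure (Pi\<^sub>M I (\<lambda>_. \<pi> x)) A) \<in> borel_measurable M"
    if "A \<in> prod_algebra I (\<lambda>_. N)" for A
  proof -
    obtain E where E: "A = Pi\<^sub>E I E" "E \<in> (\<Pi> i\<in>I. sets N)"
      using \<open>A \<in> prod_algebra I (\<lambda>_. N)\<close> by (rule prod_algebraE_all)
    have "(\<lambda>x. \<Prod>i\<in>I. emeasure (\<pi> x) (E i)) \<in> borel_measurable M"
      using E(2) by (intro borel_measurable_prod_ennreal
          measurable_compose[OF meas measurable_emeasure_subprob_algebra]) auto
    then show ?thesis
    proof (rule measurable_cong[THEN iffD1, rotated])
      fix x assume x: "x \<in> space M"
      interpret product_prob_space "\<lambda>_. \<pi> x" I using product_prob_space_const[OF prob[OF x]] .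
      show "(\<Prod>i\<in>I. emeasure (\<pi> x) (E i)) = emeasure (Pi\<^sub>M I (\<lambda>_. \<pi> x)) A"
        unfolding E(1) using E(2) sets[OF x] I by (intro emeasure_PiM[symmetric]) (auto simp: Pi_iff)
    qed
  qed
  show ?thesis
  proof (rule measurable_subprob_algebra_generated[OF sets_PiM Int_stable_prod_algebra
        prod_algebra_sets_into_space])
    fix x assume x: "x \<in> space M"
    interpret product_prob_space "\<lambda>_. \<pi> x" I using product_prob_space_const[OF prob[OF x]] .
    show "subprob_space (Pi\<^sub>M I (\<lambda>_. \<pi> x))" by (rule P.subprob_space_axioms)
    show "sets (Pi\<^sub>M I (\<lambda>_. \<pi> x)) = sets (Pi\<^sub>M I (\<lambda>_. N))"
      using sets[OF x] by (intro sets_PiM_cong) auto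
  qed (use box space_in_prod_algebra[of I "\<lambda>_. N"] in auto)
qed

lemma integral_kernel_measurable:
  fixes f :: "'x \<Rightarrow> 'b \<Rightarrow> real"
  assumes f[measurable]: "(\<lambda>(x, y). f x y) \<in> borel_measurable (M \<Otimes>\<^sub>M N)"
    and L[measurable]: "L \<in> measurable M (subprob_algebra N)"
    and int: "\<And>x. x \<in> space M \<Longrightarrow> integrable (L x) (f x)"
  shows "(\<lambda>x. \<integral>y. f x y \<partial>L x) \<in> borel_measurable M"
proof -
  have f1: "(\<lambda>(x, y). ennreal (f x y)) \<in> borel_measurable (M \<Otimes>\<^sub>M N)" by measurable
  have f2: "(\<lambda>(x, y). ennreal (- f x y)) \<in> borel_measurable (M \<Otimes>\<^sub>M N)" by measurable
  have "(\<lambda>x. enn2real (\<integral>\<^sup>+y. ennreal (f x y) \<partial>L x) - enn2real (\<integral>\<^sup>+y. ennreal (- f x y) \<partial>L x))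
          \<in> borel_measurable M"
    using nn_integral_measurable_subprob_algebra2[OF f1 L]
      nn_integral_measurable_subprob_algebra2[OF f2 L]
    by measurable
  then show ?thesis
    by (rule measurable_cong[THEN iffD1, rotated]) (simp add: real_lebesgue_integral_def[OF int])
qed

lemma nested_integral_eq_imp_AE_AE_eq:
  fixes f g :: "'x \<Rightarrow> 'y \<Rightarrow> real"
  assumes le: "\<And>x y. x \<in> space M \<Longrightarrow> f x y \<le> g x y"
    and int: "\<And>x. x \<in> space M \<Longrightarrow> integrable (N x) (f x)"
             "\<And>x. x \<in> space M \<Longrightarrow> integrable (N x) (g x)"
    and int_outer: "integrable M (\<lambda>x. \<integral>y. f x y \<partial>N x)" "integrable M (\<lambda>x. \<integral>y. g x y \<partial>N x)"
    and eq: "(\<integral>x. (\<integral>y. f x y \<partial>N x) \<partial>M) = (\<integral>x. (\<integral>y. g x y \<partial>N x) \<partial>M)"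
  shows "AE x in M. AE y in N x. f x y = g x y"
proof -
  define h where "h x = (\<integral>y. g x y - f x y \<partial>N x)" for x
  have h_eq: "h x = (\<integral>y. g x y \<partial>N x) - (\<integral>y. f x y \<partial>N x)" if "x \<in> space M" for x
    using int that by (simp add: h_def)
  have h_nonneg: "AE x in M. 0 \<le> h x"
    unfolding h_def using le by (intro integral_nonneg_AE AE_I2) auto
  have "integrable M (\<lambda>x. (\<integral>y. g x y \<partial>N x) - (\<integral>y. f x y \<partial>N x))"
    using int_outer by auto
  then have "integrable M h"
    using h_eq by (simp cong: Bochner_Integration.integrable_cong)
  moreover have "integral\<^sup>L M h = 0"
    using int_outer eq h_eq by (simp cong: Bochner_Integration.integral_cong)
  ultimately have "AE x in M. h x = 0"
    using integral_nonneg_eq_0_iff_AE[of M h] h_nonneg by simp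
  then show ?thesis
  proof (rule AE_mp[OF _ AE_I2], intro impI)
    fix x assume x: "x \<in> space M" and "h x = 0"
    then have "AE y in N x. g x y - f x y = 0"
      using integral_nonneg_eq_0_iff_AE[of "N x" "\<lambda>y. g x y - f x y"] int[OF x] le[OF x]
      by (simp add: h_def)
    then show "AE y in N x. f x y = g x y" by eventually_elim simp
  qed
qed

section \<open>Slates drawn from the reference policy\<close>

lemma measurable_slate_component:
  fixes S :: "'x \<Rightarrow> 'a::topological_space \<Rightarrow> real"
  assumes S: "(\<lambda>(x, a). S x a) \<in> borel_measurable (M \<Otimes>\<^sub>M borel)"
  shows "(\<lambda>(x, as). S x (as j)) \<in> borel_measurable (M \<Otimes>\<^sub>M Pi\<^sub>M {..<K} (\<lambda>_. borel))"
proof (cases "j < K")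
  case True
  have "(\<lambda>(x, as). (x, as j)) \<in> measurable (M \<Otimes>\<^sub>M Pi\<^sub>M {..<K} (\<lambda>_. borel)) (M \<Otimes>\<^sub>M borel)"
    by measurable (simp add: True)
  from measurable_compose[OF this S] show ?thesis by (simp add: case_prod_beta')
next
  case False
  \<comment> \<open>points of \<open>Pi\<^sub>M {..<K} _\<close> are extensional, so \<open>as j = undefined\<close> on the whole space\<close>
  have "(\<lambda>(x, as). (x, undefined)) \<in> measurable (M \<Otimes>\<^sub>M Pi\<^sub>M {..<K} (\<lambda>_. borel)) (M \<Otimes>\<^sub>M borel)"
    by measurable
  from measurable_compose[OF this S]
  show ?thesis
    by (rule measurable_cong[THEN iffD1, rotated])
       (use False in \<open>auto simp: space_pair_measure space_PiM PiE_def extensional_def\<close>)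
qed

locale slate_model =
  fixes K :: nat and d0 :: "'x measure"
    and \<pi>0 :: "'x \<Rightarrow> 'a::{topological_space, second_countable_topology} measure"
  assumes K_pos: "0 < K"
    and prob_space_d0: "prob_space d0"
    and prob_space_\<pi>0: "\<And>x. x \<in> space d0 \<Longrightarrow> prob_space (\<pi>0 x)"
    and sets_\<pi>0: "\<And>x. x \<in> space d0 \<Longrightarrow> sets (\<pi>0 x) = sets borel"
    and measurable_\<pi>0: "\<pi>0 \<in> measurable d0 (subprob_algebra borel)"
begin

abbreviation slate :: "'x \<Rightarrow> (nat \<Rightarrow> 'a) measure" where
  "slate x \<equiv> Pi\<^sub>M {..<K} (\<lambda>_. \<pi>0 x)"

abbreviation slate_loss ::
    "('x \<Rightarrow> 'a \<Rightarrow> real) \<Rightarrow> ('x \<Rightarrow> 'a \<Rightarrow> real) \<Rightarrow> 'x \<Rightarrow> (nat \<Rightarrow> 'a) \<Rightarrow> real"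
  where "slate_loss Rp S x as \<equiv> cross_entropy K (\<lambda>j. Rp x (as j)) (\<lambda>j. S x (as j))"

lemma pop_loss_eq: "pop_loss K d0 \<pi>0 Rp S = (\<integral>x. (\<integral>as. slate_loss Rp S x as \<partial>slate x) \<partial>d0)"
  unfolding pop_loss_def cross_entropy_def softmax_def mnl_def ..

lemma prob_space_slate: "x \<in> space d0 \<Longrightarrow> prob_space (slate x)"
  using prob_space_\<pi>0 by (intro prob_space_PiM) auto

lemma measurable_slate: "slate \<in> measurable d0 (subprob_algebra (Pi\<^sub>M {..<K} (\<lambda>_. borel)))"
  using prob_space_\<pi>0 sets_\<pi>0 measurable_\<pi>0 by (intro measurable_PiM_kernel) auto

lemma measurable_slate_loss:
  assumes "(\<lambda>(x, a). Rp x a) \<in> borel_measurable (d0 \<Otimes>\<^sub>M borel)"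
    and "(\<lambda>(x, a). S x a) \<in> borel_measurable (d0 \<Otimes>\<^sub>M borel)"
  shows "(\<lambda>(x, as). slate_loss Rp S x as) \<in> borel_measurable (d0 \<Otimes>\<^sub>M Pi\<^sub>M {..<K} (\<lambda>_. borel))"
proof -
  note [measurable] = measurable_slate_component[OF assms(1)] measurable_slate_component[OF assms(2)]
  show ?thesis unfolding cross_entropy_def softmax_def logloss_def by measurable
qed

lemma AE_slate_loss_bounds:
  assumes x: "x \<in> space d0"
    and bound: "\<And>a. a \<in> topsupp (\<pi>0 x) \<Longrightarrow> \<bar>S x a\<bar> \<le> B"
  shows "AE as in slate x. 0 \<le> slate_loss Rp S x as \<and> slate_loss Rp S x as \<le> ln K + 2 * B"
proof -
  have "AE as in slate x. \<forall>j\<in>{..<K}. as j \<in> topsupp (\<pi>0 x)"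
    using prob_space_\<pi>0[OF x] sets_\<pi>0[OF x]
    by (intro AE_finite_allI AE_PiM_component AE_in_topsupp) auto
  then show ?thesis
    by eventually_elim (use bound K_pos in \<open>auto intro: cross_entropy_nonneg cross_entropy_le\<close>)
qed

context
  fixes Rp S :: "'x \<Rightarrow> 'a \<Rightarrow> real" and B :: real
  assumes meas: "(\<lambda>(x, a). Rp x a) \<in> borel_measurable (d0 \<Otimes>\<^sub>M borel)"
                "(\<lambda>(x, a). S x a) \<in> borel_measurable (d0 \<Otimes>\<^sub>M borel)"
    and bound: "\<And>x a. x \<in> space d0 \<Longrightarrow> a \<in> topsupp (\<pi>0 x) \<Longrightarrow> \<bar>S x a\<bar> \<le> B"
begin

lemma integrable_slate_loss:
  assumes x: "x \<in> space d0"
  shows "integrable (slate x) (slate_loss Rp S x)"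
proof -
  interpret prob_space "slate x" using prob_space_slate[OF x] .
  have "slate_loss Rp S x \<in> borel_measurable (Pi\<^sub>M {..<K} (\<lambda>_. borel))"
    using measurable_Pair2[OF measurable_slate_loss[OF meas] x] by simp
  moreover have "sets (slate x) = sets (Pi\<^sub>M {..<K} (\<lambda>_. borel))"
    using sets_\<pi>0[OF x] by (intro sets_PiM_cong) auto
  ultimately show ?thesis
    using AE_slate_loss_bounds[where Rp = Rp and S = S, OF x bound[OF x]] x
    by (intro integrable_const_bound[where B = "ln K + 2 * B"]) (auto cong: measurable_cong_sets)
qed

lemma integral_slate_loss_bounds:
  assumes x: "x \<in> space d0"
  shows "0 \<le> (\<integral>as. slate_loss Rp S x as \<partial>slate x)"
    and "(\<integral>as. slate_loss Rp S x as \<partial>slate x) \<le> ln K + 2 * B"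
proof -
  interpret prob_space "slate x" using prob_space_slate[OF x] .
  note AE_bounds = AE_slate_loss_bounds[where Rp = Rp and S = S, OF x bound[OF x]]
  show "0 \<le> (\<integral>as. slate_loss Rp S x as \<partial>slate x)"
    using AE_bounds x by (intro integral_nonneg_AE) auto
  have "(\<integral>as. slate_loss Rp S x as \<partial>slate x) \<le> (\<integral>as. ln K + 2 * B \<partial>slate x)"
    using AE_bounds x by (intro integral_mono_AE integrable_slate_loss) auto
  then show "(\<integral>as. slate_loss Rp S x as \<partial>slate x) \<le> ln K + 2 * B"
    by (simp add: prob_space)
qed

lemma integrable_integral_slate_loss:
  "integrable d0 (\<lambda>x. \<integral>as. slate_loss Rp S x as \<partial>slate x)"
proof -
  interpret prob_space d0 by (rule prob_space_d0)
  have "(\<lambda>x. \<integral>as. slate_loss Rp S x as \<partial>slate x) \<in> borel_measurable d0"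
    using measurable_slate_loss[OF meas] measurable_slate integrable_slate_loss
    by (rule integral_kernel_measurable)
  then show ?thesis
    using integral_slate_loss_bounds
    by (intro integrable_const_bound[where B = "ln K + 2 * B"] AE_I2) auto
qed

end

lemma pop_loss_eq_imp_AE_slate_loss_eq:
  assumes meas: "(\<lambda>(x, a). Rp x a) \<in> borel_measurable (d0 \<Otimes>\<^sub>M borel)"
                "(\<lambda>(x, a). R x a) \<in> borel_measurable (d0 \<Otimes>\<^sub>M borel)"
    and bound: "\<And>x a. x \<in> space d0 \<Longrightarrow> a \<in> topsupp (\<pi>0 x) \<Longrightarrow> \<bar>R x a\<bar> \<le> B \<and> \<bar>Rp x a\<bar> \<le> B"
    and eq: "pop_loss K d0 \<pi>0 Rp R = pop_loss K d0 \<pi>0 Rp Rp"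
  shows "AE x in d0. AE as in slate x. slate_loss Rp R x as = slate_loss Rp Rp x as"
proof -
  have "AE x in d0. AE as in slate x. slate_loss Rp Rp x as = slate_loss Rp R x as"
  proof (rule nested_integral_eq_imp_AE_AE_eq)
    show "slate_loss Rp Rp x as \<le> slate_loss Rp R x as" for x as
      using K_pos by (rule cross_entropy_self_le)
  qed (use meas bound eq in \<open>auto simp: pop_loss_eq
        intro: integrable_slate_loss integrable_integral_slate_loss\<close>)
  then show ?thesis
    by eventually_elim (elim AE_mp, simp)
qed


lemma pop_loss_eq_imp_AE_eq_on_topsupp:
  assumes K: "K \<ge> 2"
    and meas: "(\<lambda>(x, a). Rp x a) \<in> borel_measurable (d0 \<Otimes>\<^sub>M borel)"
              "(\<lambda>(x, a). R x a) \<in> borel_measurable (d0 \<Otimes>\<^sub>M borel)"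
    and bound: "\<And>x a. x \<in> space d0 \<Longrightarrow> a \<in> topsupp (\<pi>0 x) \<Longrightarrow> \<bar>R x a\<bar> \<le> B \<and> \<bar>Rp x a\<bar> \<le> B"
    and centered: "\<And>x. x \<in> space d0 \<Longrightarrow> (\<integral>a. R x a \<partial>\<pi>0 x) = 0"
                  "\<And>x. x \<in> space d0 \<Longrightarrow> (\<integral>a. Rp x a \<partial>\<pi>0 x) = 0"
    and cont: "AE x in d0. continuous_on (topsupp (\<pi>0 x)) (R x)"
              "AE x in d0. continuous_on (topsupp (\<pi>0 x)) (Rp x)"
    and eq: "pop_loss K d0 \<pi>0 Rp R = pop_loss K d0 \<pi>0 Rp Rp"
  shows "AE x in d0. \<forall>a \<in> topsupp (\<pi>0 x). R x a = Rp x a"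
proof -
  have "AE x in d0. AE as in slate x. slate_loss Rp R x as = slate_loss Rp Rp x as"
    using meas bound eq by (rule pop_loss_eq_imp_AE_slate_loss_eq)
  then show ?thesis
    using cont AE_space
  proof eventually_elim
    case (elim x)
    then have x: "x \<in> space d0" by simp
    show ?case
    proof (rule cross_entropy_AE_eq_self_imp_eq_on_topsupp[OF K prob_space_\<pi>0[OF x] sets_\<pi>0[OF x]])
      show "R x \<in> borel_measurable borel" "Rp x \<in> borel_measurable borel"
        using measurable_Pair2[OF meas(2) x] measurable_Pair2[OF meas(1) x] by simp_all
    qed (use elim bound[OF x] centered[OF x] in simp_all)
  qed
qed
end

lemma compact_supp_common_bound:
  assumes "compact_supp d0 \<pi>0 F" "S \<in> F" "T \<in> F"
  obtains B where "\<And>x a. x \<in> space d0 \<Longrightarrow> a \<in> topsupp (\<pi>0 x) \<Longrightarrow> \<bar>S x a\<bar> \<le> B \<and> \<bar>T x a\<bar> \<le> B"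
proof -
  have "bounded_on_supp d0 \<pi>0 S" "bounded_on_supp d0 \<pi>0 T"
    using assms unfolding compact_supp_def by auto
  then obtain B1 B2 where
    "\<And>x a. x \<in> space d0 \<Longrightarrow> a \<in> topsupp (\<pi>0 x) \<Longrightarrow> \<bar>S x a\<bar> \<le> B1"
    "\<And>x a. x \<in> space d0 \<Longrightarrow> a \<in> topsupp (\<pi>0 x) \<Longrightarrow> \<bar>T x a\<bar> \<le> B2"
    unfolding bounded_on_supp_def bdd_above_def supp_pairs_def by fastforce
  then show ?thesis by (intro that[of "max B1 B2"]) fastforce
qed

lemma regret_eq_0_if_AE_eq_on_topsupp:
  assumes "AE x in d0. \<forall>a \<in> topsupp (\<pi>0 x). R x a = Rp x a"
  shows "regret tb d0 \<pi>0 Rp R = 0"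
  unfolding regret_def
proof (rule integral_eq_zero_AE)
  show "AE x in d0. Rp x (sel tb \<pi>0 Rp x) - Rp x (sel tb \<pi>0 R x) = 0"
    using assms
  proof eventually_elim
    case (elim x)
    then have "argmax_supp \<pi>0 R x = argmax_supp \<pi>0 Rp x"
      unfolding argmax_supp_def by auto
    then show ?case by (simp add: sel_def)
  qed
qed

theorem lemma2:
  fixes K :: nat
    and d0 :: "'x measure"
    and \<pi>0 :: "'x \<Rightarrow> ('a::{metric_space, second_countable_topology}) measure"
    and P :: "'p set"
    and Rf :: "'p \<Rightarrow> 'x \<Rightarrow> 'a \<Rightarrow> real"
    and tb :: "'a set \<Rightarrow> 'a"
    and p :: 'p and R :: "'x \<Rightarrow> 'a \<Rightarrow> real"
  assumes K2: "K \<ge> 2"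
    and d0_prob: "prob_space d0"
    and pi0_prob: "\<And>x. x \<in> space d0 \<Longrightarrow> prob_space (\<pi>0 x)"
    and pi0_sets: "\<And>x. x \<in> space d0 \<Longrightarrow> sets (\<pi>0 x) = sets borel"
    and pi0_meas: "\<pi>0 \<in> measurable d0 (subprob_algebra borel)"
    and tb_sel: "\<And>B. B \<noteq> {} \<Longrightarrow> tb B \<in> B"
    and R_meas: "\<And>q. q \<in> P \<Longrightarrow> (\<lambda>(x, a). Rf q x a) \<in> borel_measurable (d0 \<Otimes>\<^sub>M borel)"
    and R_centered: "\<And>q x. q \<in> P \<Longrightarrow> x \<in> space d0 \<Longrightarrow> (\<integral>a. Rf q x a \<partial>(\<pi>0 x)) = 0"
    and F_compact: "compact_supp d0 \<pi>0 (Rf ` P)"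
    and F_cont: "\<And>S. S \<in> Rf ` P \<Longrightarrow> AE x in d0. continuous_on (topsupp (\<pi>0 x)) (S x)"
    and p_in: "p \<in> P"
    and R_in: "R \<in> Rf ` P"
    and loss_eq: "pop_loss K d0 \<pi>0 (Rf p) R = pop_loss K d0 \<pi>0 (Rf p) (Rf p)"
  shows "(AE x in d0. \<forall>a \<in> topsupp (\<pi>0 x). R x a = Rf p x a) \<and> regret tb d0 \<pi>0 (Rf p) R = 0"
proof -
  interpret slate_model K d0 \<pi>0
    using K2 d0_prob pi0_prob pi0_sets pi0_meas by (intro slate_model.intro) simp_all
  obtain q where q: "q \<in> P" "R = Rf q" using R_in by auto
  obtain B where bound:
    "\<And>x a. x \<in> space d0 \<Longrightarrow> a \<in> topsupp (\<pi>0 x) \<Longrightarrow> \<bar>R x a\<bar> \<le> B \<and> \<bar>Rf p x a\<bar> \<le> B"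
    using compact_supp_common_bound[OF F_compact R_in imageI[OF p_in]] by blast
  have "AE x in d0. \<forall>a \<in> topsupp (\<pi>0 x). R x a = Rf p x a"
  proof (rule pop_loss_eq_imp_AE_eq_on_topsupp[OF K2 _ _ bound _ _ _ _ loss_eq])
    show "(\<lambda>(x, a). Rf p x a) \<in> borel_measurable (d0 \<Otimes>\<^sub>M borel)"
         "(\<lambda>(x, a). R x a) \<in> borel_measurable (d0 \<Otimes>\<^sub>M borel)"
      using R_meas p_in q by auto
  qed (use R_centered F_cont R_in p_in q in auto)
  then show ?thesis using regret_eq_0_if_AE_eq_on_topsupp by blast
qed

end
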